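(* Let $p\ge1$, $X=\{0,1,\dots,p\}$, and for $i\in\{1,\dots,p\}$ let $e_i$ be the transformation of $X^\ast$ defined recursively by $e_i(0w)=i\,e_i(w)$, $e_i(iw)=0w$, $e_i(jw)=jw$ for $j\notin\{0,i\}$. For $n\ge1$ let $A_n=\sum_{i=1}^p\bigl(M^{(n)}_i+(M^{(n)}_i)^{-1}\bigr)$ with $M^{(n)}_i$ the permutation matrix of $e_i$ on $X^n$, let $P_n(\lambda)=\det(\lambda I-A_n)$, $f_p(\lambda)=\lambda^2-2(p-1)\lambda-2p$, and $f_p^{\circ i}$ its $i$-fold iterate. Then for each $n\ge1$ $$P_n(\lambda)=(\lambda-2p)\prod_{i=0}^{n-1}\bigl(f_p^{\circ i}(\lambda)+2\bigr)\prod_{i=0}^{n-1}\bigl(f_p^{\circ i}(\lambda)-2(p-1)\bigr)^{(p-1)(p+1)^{n-i-1}}.$$ In particular the spectrum of $A_n$ (as a multiset) is the union of $\{2p\}$, the sets $f_p^{-i}(-2)$ for $i=0,\dots,n-1$, and the sets $f_p^{-i}(2(p-1))$ for $i=0,\dots,n-1$, each element of the latter counted with multiplicity $(p-1)(p+1)^{n-i-1}$.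
   Context: $f_p^{-i}(x)$ denotes the multiset of roots of $f_p^{\circ i}(\lambda)-x$. $A_n$ is the adjacency matrix of the $n$-th Schreier graph of the star automaton group $\mathcal G_{S_p}=\langle e_1,\dots,e_p\rangle$. *)

theory Defs
  imports "Jordan_Normal_Form.Char_Poly" "HOL-Computational_Algebra.Polynomial"
begin

fun star_gen :: "nat \<Rightarrow> nat list \<Rightarrow> nat list" where
  "star_gen i [] = []"
| "star_gen i (x # w) =
     (if x = 0 then i # star_gen i w else if x = i then 0 # w else x # w)"

text \<open>Enumeration of X^n: index k < (p+1)^n corresponds to the word whose
  j-th letter is the j-th base-(p+1) digit of k.\<close>
definition word_of :: "nat \<Rightarrow> nat \<Rightarrow> nat \<Rightarrow> nat list" where
  "word_of p n k = map (\<lambda>j. k div (p + 1) ^ j mod (p + 1)) [0..<n]"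

definition perm_mat :: "nat \<Rightarrow> nat \<Rightarrow> nat \<Rightarrow> real mat" where
  "perm_mat p n i = mat ((p + 1) ^ n) ((p + 1) ^ n)
     (\<lambda>(a, b). if star_gen i (word_of p n b) = word_of p n a then 1 else 0)"

text \<open>Adjacency matrix A_n = sum_i (M_i + M_i^{-1}); the inverse of a permutation
  matrix is its transpose.\<close>
definition schreier_adj :: "nat \<Rightarrow> nat \<Rightarrow> real mat" where
  "schreier_adj p n = mat ((p + 1) ^ n) ((p + 1) ^ n)
     (\<lambda>(a, b). \<Sum>i\<in>{1..p}. perm_mat p n i $$ (a, b) + transpose_mat (perm_mat p n i) $$ (a, b))"

definition fp :: "nat \<Rightarrow> 'a :: comm_ring_1 poly" where
  "fp p = [: - 2 * of_nat p, - 2 * (of_nat p - 1), 1 :]"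

definition fp_iter :: "nat \<Rightarrow> nat \<Rightarrow> 'a :: comm_ring_1 poly" where
  "fp_iter p i = ((\<lambda>q. pcompose (fp p) q) ^^ i) [:0, 1:]"

end

theory Submission
  imports Defs
begin

(* Order the words of length n + 1 by their first letter. Since e_i(0w) = i e_i(w), e_i(iw) = 0w
   and e_j fixes iw for j other than i, the reordered A_(n+1) is the block matrix
   [[0, B^T], [B, 2(p-1) I]], where B stacks the p blocks I + M_i of level n. Every M_i is a
   permutation matrix, so B^T B = 2p I + A_n, and a Schur complement computation gives
     P_(n+1)(x) = (x - 2(p-1))^((p-1)(p+1)^n) * P_n(f_p(x)).
   Iterating from P_0(x) = x - 2p and using f_p(y) - 2p = (y + 2)(y - 2p) yields the
   factorisation; the multiplicities of the eigenvalues are then read off over the complex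
   numbers. *)

section \<open>Matrix and polynomial identities\<close>

lemma det_permute_rows_cols:
  assumes A: "A \<in> carrier_mat n n" and s: "s permutes {0..<n}"
  shows "det (mat n n (\<lambda>(i, j). A $$ (s i, s j))) = det A"
proof -
  let ?R = "mat n n (\<lambda>(i, j). A $$ (s i, j))" and ?RC = "mat n n (\<lambda>(i, j). A $$ (s i, s j))"
  have R: "det ?R = signof s * det A" by (rule det_permute_rows[OF A s])
  have "transpose_mat ?RC = mat n n (\<lambda>(i, j). transpose_mat ?R $$ (s i, j))"
    using s by (intro eq_matI) (auto simp: permutes_in_image)
  then have "det (transpose_mat ?RC) = signof s * det (transpose_mat ?R)"
    using det_permute_rows[OF _ s, of "transpose_mat ?R"] by simp
  then have "det ?RC = signof s * (signof s * det A)"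
    using R det_transpose[of ?R n] det_transpose[of ?RC n] by simp
  also have "signof s * (signof s * det A) = (signof s * signof s) * det A" by (simp add: ac_simps)
  also have "(signof s * signof s :: 'a) = 1" by (simp add: sign_def)
  finally show ?thesis by simp
qed

lemma char_poly_permute:
  assumes A: "A \<in> carrier_mat n n" and s: "s permutes {0..<n}"
  shows "char_poly (mat n n (\<lambda>(i, j). A $$ (s i, s j))) = char_poly A"
proof -
  have "char_poly_matrix (mat n n (\<lambda>(i, j). A $$ (s i, s j))) =
      mat n n (\<lambda>(i, j). char_poly_matrix A $$ (s i, s j))"
    using A s permutes_inj[OF s, THEN inj_eq]
    by (intro eq_matI) (auto simp: char_poly_matrix_def permutes_in_image)
  then show ?thesis
    unfolding char_poly_def using det_permute_rows_cols[OF char_poly_matrix_closed[OF A] s] by simp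
qed

lemma det_four_block_smult_one:
  fixes x y :: "'a :: idom"
  assumes B: "B \<in> carrier_mat m n" and C: "C \<in> carrier_mat n m"
  shows "det (four_block_mat (x \<cdot>\<^sub>m 1\<^sub>m n) (- C) (- B) (y \<cdot>\<^sub>m 1\<^sub>m m)) * y ^ n =
    det ((x * y) \<cdot>\<^sub>m 1\<^sub>m n - C * B) * y ^ m"
proof -
  let ?M = "four_block_mat (x \<cdot>\<^sub>m 1\<^sub>m n) (- C) (- B) (y \<cdot>\<^sub>m 1\<^sub>m m)"
  (* right multiplication by L clears the lower left block and leaves the Schur complement *)
  define L where "L = four_block_mat (y \<cdot>\<^sub>m 1\<^sub>m n) (0\<^sub>m n m) B (1\<^sub>m m)"
  have "?M * L = four_block_mat
      ((x \<cdot>\<^sub>m 1\<^sub>m n) * (y \<cdot>\<^sub>m 1\<^sub>m n) + - C * B)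
      ((x \<cdot>\<^sub>m 1\<^sub>m n) * 0\<^sub>m n m + - C * 1\<^sub>m m)
      (- B * (y \<cdot>\<^sub>m 1\<^sub>m n) + (y \<cdot>\<^sub>m 1\<^sub>m m) * B)
      (- B * 0\<^sub>m n m + (y \<cdot>\<^sub>m 1\<^sub>m m) * 1\<^sub>m m)"
    unfolding L_def using B C by (intro mult_four_block_mat) auto
  also have "\<dots> = four_block_mat ((x * y) \<cdot>\<^sub>m 1\<^sub>m n - C * B) (- C) (0\<^sub>m m n) (y \<cdot>\<^sub>m 1\<^sub>m m)"
    using B C by (intro cong_four_block_mat eq_matI) (auto simp: mult_smult_distrib)
  finally have product: "?M * L = \<dots>" .
  have "det ?M * y ^ n = det ?M * det L"
    unfolding L_def using B by (subst det_four_block_mat_upper_right_zero) auto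
  also have "\<dots> = det (?M * L)"
    unfolding L_def using B C by (intro det_mult[symmetric, of _ "n + m"]) auto
  also have "\<dots> = det ((x * y) \<cdot>\<^sub>m 1\<^sub>m n - C * B) * y ^ m"
    unfolding product using B C by (subst det_four_block_mat_lower_left_zero) auto
  finally show ?thesis .
qed

lemma char_poly_pcompose:
  assumes A: "A \<in> carrier_mat n n"
  shows "pcompose (char_poly A) r = det (r \<cdot>\<^sub>m 1\<^sub>m n - map_mat (\<lambda>a. [:a:]) A)"
proof -
  have hom: "comm_ring_hom (\<lambda>q. pcompose q r)"
    by unfold_locales (auto simp: pcompose_add pcompose_mult pcompose_1)
  have "map_mat (\<lambda>q. pcompose q r) (char_poly_matrix A) = r \<cdot>\<^sub>m 1\<^sub>m n - map_mat (\<lambda>a. [:a:]) A"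
    using A by (intro eq_matI) (auto simp: char_poly_matrix_def pcompose_pCons)
  then show ?thesis
    unfolding char_poly_def comm_ring_hom.hom_det[OF hom, symmetric] by simp
qed

lemma char_poly_add_smult_one:
  assumes A: "A \<in> carrier_mat n n"
  shows "char_poly (A + a \<cdot>\<^sub>m 1\<^sub>m n) = pcompose (char_poly A) [:- a, 1:]"
proof -
  have "char_poly (A + a \<cdot>\<^sub>m 1\<^sub>m n) = pcompose (char_poly (A + a \<cdot>\<^sub>m 1\<^sub>m n)) [:0, 1:]"
    by simp
  also have "\<dots> = det ([:0, 1:] \<cdot>\<^sub>m 1\<^sub>m n - map_mat (\<lambda>b. [:b:]) (A + a \<cdot>\<^sub>m 1\<^sub>m n))"
    using A by (intro char_poly_pcompose) simp
  also have "[:0, 1:] \<cdot>\<^sub>m 1\<^sub>m n - map_mat (\<lambda>b. [:b:]) (A + a \<cdot>\<^sub>m 1\<^sub>m n) =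
      [:- a, 1:] \<cdot>\<^sub>m 1\<^sub>m n - map_mat (\<lambda>b. [:b:]) A"
    using A by (intro eq_matI) auto
  also have "det \<dots> = pcompose (char_poly A) [:- a, 1:]"
    by (rule char_poly_pcompose[OF A, symmetric])
  finally show ?thesis .
qed

lemma char_poly_four_block_transpose:
  fixes B :: "'a :: idom mat"
  assumes B: "B \<in> carrier_mat m n"
  shows "char_poly (four_block_mat (0\<^sub>m n n) (transpose_mat B) B (c \<cdot>\<^sub>m 1\<^sub>m m)) * [:- c, 1:] ^ n =
    pcompose (char_poly (transpose_mat B * B)) [:0, - c, 1:] * [:- c, 1:] ^ m"
proof -
  let ?B = "map_mat (\<lambda>a. [:a:]) B"
  have "char_poly_matrix (four_block_mat (0\<^sub>m n n) (transpose_mat B) B (c \<cdot>\<^sub>m 1\<^sub>m m)) =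
      four_block_mat ([:0, 1:] \<cdot>\<^sub>m 1\<^sub>m n) (- transpose_mat ?B) (- ?B) ([:- c, 1:] \<cdot>\<^sub>m 1\<^sub>m m)"
    using B by (intro eq_matI) (auto simp: char_poly_matrix_def)
  then have "char_poly (four_block_mat (0\<^sub>m n n) (transpose_mat B) B (c \<cdot>\<^sub>m 1\<^sub>m m)) * [:- c, 1:] ^ n =
      det (([:0, 1:] * [:- c, 1:]) \<cdot>\<^sub>m 1\<^sub>m n - transpose_mat ?B * ?B) * [:- c, 1:] ^ m"
    unfolding char_poly_def using B by (simp add: det_four_block_smult_one)
  also have "transpose_mat ?B * ?B = map_mat (\<lambda>a. [:a:]) (transpose_mat B * B)"
    using B by (simp add: map_poly_mult map_mat_transpose)
  also have "det (([:0, 1:] * [:- c, 1:]) \<cdot>\<^sub>m 1\<^sub>m n - map_mat (\<lambda>a. [:a:]) (transpose_mat B * B)) =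
      pcompose (char_poly (transpose_mat B * B)) [:0, - c, 1:]"
    using B by (subst char_poly_pcompose[of _ n]) simp_all
  finally show ?thesis .
qed

definition stack_mat :: "nat \<Rightarrow> nat \<Rightarrow> (nat \<Rightarrow> 'a mat) \<Rightarrow> 'a mat" where
  "stack_mat m n F = mat (m * n) n (\<lambda>(r, a). F (r div n) $$ (r mod n, a))"

lemma dim_stack_mat [simp]: "dim_row (stack_mat m n F) = m * n" "dim_col (stack_mat m n F) = n"
  by (simp_all add: stack_mat_def)

lemma transpose_stack_mat_mult_index:
  fixes F :: "nat \<Rightarrow> 'a :: comm_semiring_0 mat"
  assumes F: "\<And>j. j < m \<Longrightarrow> F j \<in> carrier_mat n n" and ab: "a < n" "b < n"
  shows "(transpose_mat (stack_mat m n F) * stack_mat m n F) $$ (a, b) =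
    (\<Sum>j<m. (transpose_mat (F j) * F j) $$ (a, b))"
proof -
  let ?g = "\<lambda>j k. F j $$ (k, a) * F j $$ (k, b)"
  have "(transpose_mat (stack_mat m n F) * stack_mat m n F) $$ (a, b) =
      (\<Sum>r<m * n. ?g (r div n) (r mod n))"
    using ab by (simp add: stack_mat_def scalar_prod_def lessThan_atLeast0)
  also have "\<dots> = (\<Sum>j<m. \<Sum>r\<in>{j * n..<j * n + n}. ?g (r div n) (r mod n))"
    by (rule sum.nat_group[symmetric])
  also have "\<dots> = (\<Sum>j<m. \<Sum>k<n. ?g j k)"
  proof (rule sum.cong[OF refl])
    fix j
    have "(\<Sum>r\<in>{j * n..<j * n + n}. ?g (r div n) (r mod n)) =
        (\<Sum>k<n. ?g ((j * n + k) div n) ((j * n + k) mod n))"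
      using sum.atLeastLessThan_shift_bounds[of "\<lambda>r. ?g (r div n) (r mod n)" 0 "j * n" n]
      by (simp add: add.commute lessThan_atLeast0)
    also have "\<dots> = (\<Sum>k<n. ?g j k)"
      by (intro sum.cong refl) simp
    finally show "(\<Sum>r\<in>{j * n..<j * n + n}. ?g (r div n) (r mod n)) = (\<Sum>k<n. ?g j k)" .
  qed
  also have "\<dots> = (\<Sum>j<m. (transpose_mat (F j) * F j) $$ (a, b))"
  proof (rule sum.cong[OF refl])
    fix j assume "j \<in> {..<m}"
    then have "F j \<in> carrier_mat n n" using F by simp
    then show "(\<Sum>k<n. ?g j k) = (transpose_mat (F j) * F j) $$ (a, b)"
      using ab by (auto simp: scalar_prod_def lessThan_atLeast0)
  qed
  finally show ?thesis .
qed

lemma transpose_one_add_mult: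
  fixes M :: "'a :: comm_ring_1 mat"
  assumes M: "M \<in> carrier_mat n n" and orth: "transpose_mat M * M = 1\<^sub>m n"
  shows "transpose_mat (1\<^sub>m n + M) * (1\<^sub>m n + M) = 2 \<cdot>\<^sub>m 1\<^sub>m n + (M + transpose_mat M)"
proof -
  have Mt: "transpose_mat M \<in> carrier_mat n n" using M by simp
  have "transpose_mat (1\<^sub>m n + M) * (1\<^sub>m n + M) = (1\<^sub>m n + transpose_mat M) * (1\<^sub>m n + M)"
    by (simp add: transpose_add[OF one_carrier_mat M])
  also have "\<dots> = (1\<^sub>m n + M) + (transpose_mat M + transpose_mat M * M)"
    by (simp only: add_mult_distrib_mat[OF one_carrier_mat Mt add_carrier_mat[OF M]]
        left_mult_one_mat[OF add_carrier_mat[OF M]]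
        mult_add_distrib_mat[OF Mt one_carrier_mat M] right_mult_one_mat[OF Mt])
  also have "\<dots> = 2 \<cdot>\<^sub>m 1\<^sub>m n + (M + transpose_mat M)"
    unfolding orth using M by (intro eq_matI) auto
  finally show ?thesis .
qed

lemma pcompose_power: "pcompose (q ^ k) r = pcompose q r ^ k"
  by (induction k) (simp_all add: pcompose_mult pcompose_1)

lemma order_prod:
  fixes f :: "'b \<Rightarrow> 'a :: idom poly"
  assumes "finite S" "\<And>i. i \<in> S \<Longrightarrow> f i \<noteq> 0"
  shows "order x (\<Prod>i\<in>S. f i) = (\<Sum>i\<in>S. order x (f i))"
  using assms by (induction S rule: finite_induct) (simp_all add: order_mult)

lemma order_power: "(q :: 'a :: idom poly) \<noteq> 0 \<Longrightarrow> order x (q ^ k) = k * order x q"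
  by (induction k) (simp_all add: order_mult)

section \<open>Words and generators\<close>

lemma digit_cons_div_mod:
  fixes x p k :: nat
  assumes "x \<le> p"
  shows "(x + (p + 1) * k) mod (p + 1) = x" "(x + (p + 1) * k) div (p + 1) = k"
proof -
  have x: "x mod (p + 1) = x" "x div (p + 1) = 0" using assms by simp_all
  show "(x + (p + 1) * k) mod (p + 1) = x"
    by (simp only: mod_mult_self2 x(1))
  have "(x + (p + 1) * k) div (p + 1) = k + x div (p + 1)"
    by (rule div_mult_self2) simp
  then show "(x + (p + 1) * k) div (p + 1) = k"
    using x(2) by simp
qed

lemma digit_cons_less:
  fixes x p k :: nat
  assumes "x \<le> p" "k < (p + 1) ^ n"
  shows "x + (p + 1) * k < (p + 1) ^ Suc n"
proof -
  have "x + (p + 1) * k < (p + 1) + (p + 1) * k" using assms(1) by linarith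
  also have "\<dots> = (p + 1) * (k + 1)" by (simp add: algebra_simps)
  also have "\<dots> \<le> (p + 1) * (p + 1) ^ n" using assms(2) by (intro mult_le_mono2) simp
  finally show ?thesis by simp
qed

lemma mult_add_eq_iff:
  fixes N :: nat
  assumes "a < N" "b < N"
  shows "i * N + a = j * N + b \<longleftrightarrow> i = j \<and> a = b"
proof -
  have "(i * N + a) div N = i" "(i * N + a) mod N = a"
    "(j * N + b) div N = j" "(j * N + b) mod N = b"
    using assms by simp_all
  then show ?thesis by metis
qed

lemma word_of_Suc: "word_of p (Suc n) k = k mod (p + 1) # word_of p n (k div (p + 1))"
proof -
  have "[0..<Suc n] = 0 # map Suc [0..<n]"
    by (simp add: map_Suc_upt upt_conv_Cons del: upt_Suc)
  moreover have "k div (p + 1) ^ Suc j mod (p + 1) = k div (p + 1) div (p + 1) ^ j mod (p + 1)" for j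
    by (simp only: power_Suc div_mult2_eq)
  ultimately show ?thesis
    unfolding word_of_def by simp
qed

lemma word_of_Cons: "x \<le> p \<Longrightarrow> word_of p (Suc n) (x + (p + 1) * k) = x # word_of p n k"
  by (simp only: word_of_Suc digit_cons_div_mod)

lemma length_word_of [simp]: "length (word_of p n k) = n"
  by (simp add: word_of_def)

lemma set_word_of: "set (word_of p n k) \<subseteq> {..p}"
  by (auto simp: word_of_def)

lemma word_of_eq_iff:
  assumes "k < (p + 1) ^ n" "l < (p + 1) ^ n"
  shows "word_of p n k = word_of p n l \<longleftrightarrow> k = l"
  using assms
proof (induction n arbitrary: k l)
  case (Suc n)
  have "k div (p + 1) < (p + 1) ^ n" "l div (p + 1) < (p + 1) ^ n"
    using Suc.prems by (auto simp: less_mult_imp_div_less mult.commute)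
  with Suc.IH have "word_of p (Suc n) k = word_of p (Suc n) l \<longleftrightarrow>
      k mod (p + 1) = l mod (p + 1) \<and> k div (p + 1) = l div (p + 1)"
    by (simp add: word_of_Suc)
  then show ?case by (metis div_mult_mod_eq)
qed simp

fun word_index :: "nat \<Rightarrow> nat list \<Rightarrow> nat" where
  "word_index p [] = 0"
| "word_index p (x # w) = x + (p + 1) * word_index p w"

lemma word_index_less: "set w \<subseteq> {..p} \<Longrightarrow> word_index p w < (p + 1) ^ length w"
proof (induction w)
  case (Cons x w)
  then show ?case using digit_cons_less[of x p "word_index p w" "length w"] by simp
qed simp

lemma word_of_word_index: "set w \<subseteq> {..p} \<Longrightarrow> word_of p (length w) (word_index p w) = w"
proof (induction w)
  case (Cons x w)
  then show ?case using word_of_Cons[of x p "length w" "word_index p w"] by simp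
qed (simp add: word_of_def)

lemma length_star_gen [simp]: "length (star_gen i w) = length w"
  by (induction w) auto

lemma set_star_gen: "i \<le> p \<Longrightarrow> set w \<subseteq> {..p} \<Longrightarrow> set (star_gen i w) \<subseteq> {..p}"
  by (induction w) auto

lemma star_gen_eq_iff: "1 \<le> i \<Longrightarrow> star_gen i w = star_gen i v \<longleftrightarrow> w = v"
proof (induction w arbitrary: v)
  case Nil
  then show ?case by (cases v) auto
next
  case (Cons x w)
  then show ?case by (cases v) (auto split: if_splits)
qed

definition gen_index :: "nat \<Rightarrow> nat \<Rightarrow> nat \<Rightarrow> nat \<Rightarrow> nat" where
  "gen_index p n i k = word_index p (star_gen i (word_of p n k))"

lemma word_of_gen_index: "i \<le> p \<Longrightarrow> word_of p n (gen_index p n i k) = star_gen i (word_of p n k)"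
  unfolding gen_index_def
  using word_of_word_index[of "star_gen i (word_of p n k)" p] set_star_gen[OF _ set_word_of, of i p n k]
  by simp

lemma gen_index_less: "i \<le> p \<Longrightarrow> gen_index p n i k < (p + 1) ^ n"
  unfolding gen_index_def
  using word_index_less[of "star_gen i (word_of p n k)" p] set_star_gen[OF _ set_word_of, of i p n k]
  by simp

lemma gen_index_eq_iff:
  assumes "1 \<le> i" "i \<le> p" "k < (p + 1) ^ n" "l < (p + 1) ^ n"
  shows "gen_index p n i k = gen_index p n i l \<longleftrightarrow> k = l"
  by (metis assms word_of_gen_index star_gen_eq_iff word_of_eq_iff)

lemma dim_perm_mat [simp]:
  "dim_row (perm_mat p n i) = (p + 1) ^ n" "dim_col (perm_mat p n i) = (p + 1) ^ n"
  by (simp_all add: perm_mat_def)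

lemma perm_mat_carrier [simp]: "perm_mat p n i \<in> carrier_mat ((p + 1) ^ n) ((p + 1) ^ n)"
  by (simp add: carrier_matI)

lemma schreier_adj_carrier [simp]: "schreier_adj p n \<in> carrier_mat ((p + 1) ^ n) ((p + 1) ^ n)"
  by (simp add: schreier_adj_def)

lemma perm_mat_eq:
  assumes "i \<le> p" "a < (p + 1) ^ n" "b < (p + 1) ^ n"
  shows "perm_mat p n i $$ (a, b) = (if a = gen_index p n i b then 1 else 0)"
proof -
  have "star_gen i (word_of p n b) = word_of p n a \<longleftrightarrow> a = gen_index p n i b"
    by (metis assms word_of_gen_index word_of_eq_iff gen_index_less)
  then show ?thesis using assms(2,3) by (simp add: perm_mat_def)
qed

lemma perm_mat_Cons:
  assumes "1 \<le> i" "i \<le> p" "x \<le> p" "y \<le> p" "k < (p + 1) ^ n" "l < (p + 1) ^ n"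
  shows "perm_mat p (Suc n) i $$ (x + (p + 1) * k, y + (p + 1) * l) =
    (if y = 0 then (if x = i then perm_mat p n i $$ (k, l) else 0)
     else if y = i then (if x = 0 \<and> k = l then 1 else 0)
     else if x = y \<and> k = l then 1 else 0)"
proof -
  have "perm_mat p (Suc n) i $$ (x + (p + 1) * k, y + (p + 1) * l) =
      (if star_gen i (y # word_of p n l) = x # word_of p n k then 1 else 0)"
    using assms digit_cons_less[of x p k n] digit_cons_less[of y p l n]
    by (simp only: perm_mat_def index_mat case_prod_conv word_of_Cons)
  then show ?thesis
    using assms word_of_eq_iff[of l p n k] by (simp add: perm_mat_def)
qed

lemma transpose_perm_mat_mult:
  assumes "1 \<le> i" "i \<le> p"
  shows "transpose_mat (perm_mat p n i) * perm_mat p n i = 1\<^sub>m ((p + 1) ^ n)"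
proof (rule eq_matI)
  fix a b assume "a < dim_row (1\<^sub>m ((p + 1) ^ n))" "b < dim_col (1\<^sub>m ((p + 1) ^ n))"
  then have ab: "a < (p + 1) ^ n" "b < (p + 1) ^ n" by auto
  let ?g = "gen_index p n i"
  have "(transpose_mat (perm_mat p n i) * perm_mat p n i) $$ (a, b) =
      (\<Sum>k<(p + 1) ^ n. perm_mat p n i $$ (k, a) * perm_mat p n i $$ (k, b))"
    using ab by (simp add: perm_mat_def scalar_prod_def lessThan_atLeast0)
  also have "\<dots> = (\<Sum>k<(p + 1) ^ n. if k = ?g a then (if ?g a = ?g b then 1 else 0) else 0)"
    using assms ab by (intro sum.cong) (auto simp: perm_mat_eq)
  also have "\<dots> = 1\<^sub>m ((p + 1) ^ n) $$ (a, b)"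
    using assms ab gen_index_less[OF assms(2), of n b] by (simp add: gen_index_eq_iff)
  finally show "(transpose_mat (perm_mat p n i) * perm_mat p n i) $$ (a, b) =
      1\<^sub>m ((p + 1) ^ n) $$ (a, b)" .
qed (simp_all add: perm_mat_def)

section \<open>Block structure of the adjacency matrix\<close>

definition branch_mat :: "nat \<Rightarrow> nat \<Rightarrow> real mat" where
  "branch_mat p n = stack_mat p ((p + 1) ^ n) (\<lambda>j. 1\<^sub>m ((p + 1) ^ n) + perm_mat p n (Suc j))"

lemma branch_mat_carrier: "branch_mat p n \<in> carrier_mat (p * (p + 1) ^ n) ((p + 1) ^ n)"
  by (simp add: branch_mat_def carrier_matI)

lemma branch_mat_index:
  assumes "j < p" "k < (p + 1) ^ n" "a < (p + 1) ^ n"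
  shows "branch_mat p n $$ (j * (p + 1) ^ n + k, a) =
    (if k = a then 1 else 0) + perm_mat p n (Suc j) $$ (k, a)"
proof -
  have "j * (p + 1) ^ n + k < (j + 1) * (p + 1) ^ n" using assms(2) by simp
  also have "\<dots> \<le> p * (p + 1) ^ n" using assms(1) by (intro mult_le_mono1) simp
  finally show ?thesis using assms(2,3) by (simp add: branch_mat_def stack_mat_def)
qed

lemma transpose_branch_mat_mult:
  "transpose_mat (branch_mat p n) * branch_mat p n =
    schreier_adj p n + (2 * real p) \<cdot>\<^sub>m 1\<^sub>m ((p + 1) ^ n)"
proof (rule eq_matI)
  fix a b
  assume "a < dim_row (schreier_adj p n + (2 * real p) \<cdot>\<^sub>m 1\<^sub>m ((p + 1) ^ n))"
    "b < dim_col (schreier_adj p n + (2 * real p) \<cdot>\<^sub>m 1\<^sub>m ((p + 1) ^ n))"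
  then have ab: "a < (p + 1) ^ n" "b < (p + 1) ^ n" by auto
  let ?M = "\<lambda>i. perm_mat p n i" and ?N = "(p + 1) ^ n"
  have "(transpose_mat (branch_mat p n) * branch_mat p n) $$ (a, b) =
      (\<Sum>j<p. (transpose_mat (1\<^sub>m ?N + ?M (Suc j)) * (1\<^sub>m ?N + ?M (Suc j))) $$ (a, b))"
    unfolding branch_mat_def
    by (intro transpose_stack_mat_mult_index add_carrier_mat one_carrier_mat perm_mat_carrier ab)
  also have "\<dots> = (\<Sum>j<p. (2 \<cdot>\<^sub>m 1\<^sub>m ?N + (?M (Suc j) + transpose_mat (?M (Suc j)))) $$ (a, b))"
  proof (rule sum.cong[OF refl])
    fix j assume "j \<in> {..<p}"
    then show "(transpose_mat (1\<^sub>m ?N + ?M (Suc j)) * (1\<^sub>m ?N + ?M (Suc j))) $$ (a, b) =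
        (2 \<cdot>\<^sub>m 1\<^sub>m ?N + (?M (Suc j) + transpose_mat (?M (Suc j)))) $$ (a, b)"
      by (subst transpose_one_add_mult[OF perm_mat_carrier transpose_perm_mat_mult]) auto
  qed
  also have "\<dots> = 2 * real p * (if a = b then 1 else 0) + (\<Sum>i\<in>{1..p}. ?M i $$ (a, b) + ?M i $$ (b, a))"
    using ab by (simp add: sum.distrib sum.atLeast1_atMost_eq)
  also have "\<dots> = (schreier_adj p n + (2 * real p) \<cdot>\<^sub>m 1\<^sub>m ?N) $$ (a, b)"
    using ab by (simp add: schreier_adj_def)
  finally show "(transpose_mat (branch_mat p n) * branch_mat p n) $$ (a, b) =
      (schreier_adj p n + (2 * real p) \<cdot>\<^sub>m 1\<^sub>m ?N) $$ (a, b)" .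
qed (simp_all add: branch_mat_def)

lemma perm_mat_Cons_add_swap:
  assumes "1 \<le> i" "i \<le> p" "x \<le> p" "y \<le> p" "k < (p + 1) ^ n" "l < (p + 1) ^ n"
  shows "perm_mat p (Suc n) i $$ (x + (p + 1) * k, y + (p + 1) * l) +
      perm_mat p (Suc n) i $$ (y + (p + 1) * l, x + (p + 1) * k) =
    (if x = 0 then (if y = i then (if k = l then 1 else 0) + perm_mat p n y $$ (l, k) else 0)
     else if y = 0 then (if x = i then (if k = l then 1 else 0) + perm_mat p n x $$ (k, l) else 0)
     else if y = i then 0 else if x = y \<and> k = l then 2 else 0)"
  by (simp only: perm_mat_Cons[OF assms] perm_mat_Cons[OF assms(1,2,4,3,6,5)]) (use assms in auto)

lemma schreier_adj_Cons:
  assumes xy: "x \<le> p" "y \<le> p" and kl: "k < (p + 1) ^ n" "l < (p + 1) ^ n"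
  shows "schreier_adj p (Suc n) $$ (x + (p + 1) * k, y + (p + 1) * l) =
    (if x = 0 then (if y = 0 then 0 else (if k = l then 1 else 0) + perm_mat p n y $$ (l, k))
     else if y = 0 then (if k = l then 1 else 0) + perm_mat p n x $$ (k, l)
     else if x = y \<and> k = l then 2 * (real p - 1) else 0)"
proof -
  define c :: real where "c = (if x = y \<and> k = l then 2 else 0)"
  have "schreier_adj p (Suc n) $$ (x + (p + 1) * k, y + (p + 1) * l) =
      (\<Sum>i\<in>{1..p}. perm_mat p (Suc n) i $$ (x + (p + 1) * k, y + (p + 1) * l) +
        perm_mat p (Suc n) i $$ (y + (p + 1) * l, x + (p + 1) * k))"
    using digit_cons_less[OF xy(1) kl(1)] digit_cons_less[OF xy(2) kl(2)]
    by (simp add: schreier_adj_def)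
  also have "\<dots> = (\<Sum>i\<in>{1..p}.
      if x = 0 then (if y = i then (if k = l then 1 else 0) + perm_mat p n y $$ (l, k) else 0)
      else if y = 0 then (if x = i then (if k = l then 1 else 0) + perm_mat p n x $$ (k, l) else 0)
      else c - (if y = i then c else 0))"
    by (rule sum.cong[OF refl], simp only: atLeastAtMost_iff perm_mat_Cons_add_swap[OF _ _ xy kl])
      (auto simp: c_def)
  also have "\<dots> = (if x = 0 then (if y = 0 then 0 else (if k = l then 1 else 0) + perm_mat p n y $$ (l, k))
     else if y = 0 then (if k = l then 1 else 0) + perm_mat p n x $$ (k, l)
     else (real p - 1) * c)"
    using xy by (simp add: sum.delta sum_subtractf algebra_simps)
  finally show ?thesis by (simp add: c_def)
qed

(* Position x * (p + 1) ^ n + k of the ordering by first letter holds the word x w_k, whose index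
   is x + (p + 1) * k because word_of reads the least significant digit first. *)
definition first_letter_reindex :: "nat \<Rightarrow> nat \<Rightarrow> nat \<Rightarrow> nat" where
  "first_letter_reindex p n t =
    (if t < (p + 1) ^ Suc n then t div (p + 1) ^ n + (p + 1) * (t mod (p + 1) ^ n) else t)"

lemma first_letter_div_le:
  fixes t p n :: nat
  assumes "t < (p + 1) ^ Suc n"
  shows "t div (p + 1) ^ n \<le> p"
proof -
  have "t < (p + 1) * (p + 1) ^ n"
    using assms by (simp only: power_Suc)
  then have "t div (p + 1) ^ n < p + 1"
    by (rule less_mult_imp_div_less)
  then show ?thesis by simp
qed

lemma first_letter_reindex_permutes:
  "first_letter_reindex p n permutes {0..<(p + 1) ^ Suc n}"
proof (rule inj_on_nat_permutes)
  let ?N = "(p + 1) ^ n" and ?S = "{0..<(p + 1) ^ Suc n}"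
  show "inj_on (first_letter_reindex p n) ?S"
  proof (rule inj_onI)
    fix t u assume t: "t \<in> ?S" and u: "u \<in> ?S"
      and "first_letter_reindex p n t = first_letter_reindex p n u"
    then have eq: "t div ?N + (p + 1) * (t mod ?N) = u div ?N + (p + 1) * (u mod ?N)"
      by (simp add: first_letter_reindex_def)
    have le: "t div ?N \<le> p" "u div ?N \<le> p"
      using t u first_letter_div_le[of t p n] first_letter_div_le[of u p n] by simp_all
    have "(t div ?N + (p + 1) * (t mod ?N)) mod (p + 1) = (u div ?N + (p + 1) * (u mod ?N)) mod (p + 1)"
      "(t div ?N + (p + 1) * (t mod ?N)) div (p + 1) = (u div ?N + (p + 1) * (u mod ?N)) div (p + 1)"
      using eq by (rule arg_cong)+
    then have "t div ?N = u div ?N" "t mod ?N = u mod ?N"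
      unfolding digit_cons_div_mod[OF le(1)] digit_cons_div_mod[OF le(2)] .
    then show "t = u" by (metis div_mult_mod_eq)
  qed
  show "first_letter_reindex p n \<in> ?S \<rightarrow> ?S"
  proof
    fix t assume "t \<in> ?S"
    then show "first_letter_reindex p n t \<in> ?S"
      using digit_cons_less[OF first_letter_div_le[of t p n], of "t mod ?N" n]
      by (simp add: first_letter_reindex_def)
  qed
qed (simp_all add: first_letter_reindex_def)

lemma branch_block_index:
  fixes p n :: nat
  defines "N \<equiv> (p + 1) ^ n"
  assumes xy: "x \<le> p" "y \<le> p" and kl: "k < N" "l < N"
  shows "four_block_mat (0\<^sub>m N N) (transpose_mat (branch_mat p n)) (branch_mat p n)
      ((2 * (real p - 1)) \<cdot>\<^sub>m 1\<^sub>m (p * N)) $$ (x * N + k, y * N + l) =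
    (if x = 0 then (if y = 0 then 0 else (if k = l then 1 else 0) + perm_mat p n y $$ (l, k))
     else if y = 0 then (if k = l then 1 else 0) + perm_mat p n x $$ (k, l)
     else if x = y \<and> k = l then 2 * (real p - 1) else 0)"
proof -
  have B: "branch_mat p n $$ ((j - 1) * N + k', a) =
      (if k' = a then 1 else 0) + perm_mat p n j $$ (k', a)"
    if "j \<noteq> 0" "j \<le> p" "k' < N" "a < N" for j k' a
    using that branch_mat_index[of "j - 1" p k' n a] unfolding N_def by simp
  have dimB: "dim_row (branch_mat p n) = p * N" "dim_col (branch_mat p n) = N"
    by (simp_all add: branch_mat_def N_def)
  have upper: "j * N + k' < N \<longleftrightarrow> j = 0" if "k' < N" for j k'
    using that by (cases j) auto
  have shift: "j * N + k' - N = (j - 1) * N + k'" if "j \<noteq> 0" for j k'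
    using that by (cases j) auto
  have bound: "j * N + k' < N + p * N" if "j \<le> p" "k' < N" for j k'
    using that mult_le_mono1[of j p N] by linarith
  have inner: "(j - 1) * N + k' < p * N" if "j \<noteq> 0" "j \<le> p" "k' < N" for j k'
    using that mult_le_mono1[of j p N] by (cases j) auto
  show ?thesis
  proof (cases "x = 0"; cases "y = 0")
    assume "x = 0" "y = 0"
    then show ?thesis using kl dimB by simp
  next
    assume "x = 0" "y \<noteq> 0"
    then show ?thesis using xy kl dimB upper bound inner B[OF \<open>y \<noteq> 0\<close> xy(2) kl(2,1)]
      by (simp add: shift)
  next
    assume "x \<noteq> 0" "y = 0"
    then show ?thesis using xy kl dimB upper bound inner B[OF \<open>x \<noteq> 0\<close> xy(1) kl(1,2)]
      by (simp add: shift)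
  next
    assume "x \<noteq> 0" "y \<noteq> 0"
    then show ?thesis
      using xy kl upper bound inner[OF \<open>x \<noteq> 0\<close> xy(1) kl(1)] inner[OF \<open>y \<noteq> 0\<close> xy(2) kl(2)]
      by (auto simp: dimB shift mult_add_eq_iff)
  qed
qed

lemma schreier_adj_Suc_reindex:
  fixes p n :: nat
  defines "N \<equiv> (p + 1) ^ n" and "\<sigma> \<equiv> first_letter_reindex p n"
  shows "mat ((p + 1) ^ Suc n) ((p + 1) ^ Suc n) (\<lambda>(t, u). schreier_adj p (Suc n) $$ (\<sigma> t, \<sigma> u)) =
    four_block_mat (0\<^sub>m N N) (transpose_mat (branch_mat p n)) (branch_mat p n)
      ((2 * (real p - 1)) \<cdot>\<^sub>m 1\<^sub>m (p * N))"
    (is "?A = ?B")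
proof (rule eq_matI)
  have N: "0 < N" "(p + 1) ^ Suc n = N + p * N" by (simp_all add: N_def)
  fix t u assume "t < dim_row ?B" "u < dim_col ?B"
  then have tu: "t < N + p * N" "u < N + p * N" by (simp_all add: N_def branch_mat_def)
  define x k y l where "x = t div N" and "k = t mod N" and "y = u div N" and "l = u mod N"
  have xy: "x \<le> p" "y \<le> p"
    using tu first_letter_div_le[of t p n] first_letter_div_le[of u p n] N(2)
    by (simp_all add: x_def y_def N_def)
  have kl: "k < N" "l < N" using N(1) by (simp_all add: k_def l_def)
  have "?A $$ (t, u) = schreier_adj p (Suc n) $$ (x + (p + 1) * k, y + (p + 1) * l)"
    using tu N(2) by (simp add: \<sigma>_def first_letter_reindex_def x_def k_def y_def l_def N_def)
  also have "\<dots> = ?B $$ (x * N + k, y * N + l)"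
    using kl unfolding N_def by (simp only: schreier_adj_Cons[OF xy] branch_block_index[OF xy])
  also have "\<dots> = ?B $$ (t, u)"
    by (simp add: x_def k_def y_def l_def)
  finally show "?A $$ (t, u) = ?B $$ (t, u)" .
qed (simp_all add: N_def branch_mat_def)

section \<open>The characteristic polynomial\<close>

lemma char_poly_schreier_adj_0: "char_poly (schreier_adj p 0) = [:- 2 * real p, 1:]"
proof -
  have A: "schreier_adj p 0 \<in> carrier_mat 1 1" using schreier_adj_carrier[of p 0] by simp
  have "upper_triangular (schreier_adj p 0)" using A by (auto simp: upper_triangular_def)
  moreover have "diag_mat (schreier_adj p 0) = [2 * real p]"
    using A by (simp add: diag_mat_def schreier_adj_def perm_mat_def word_of_def)
  ultimately show ?thesis using char_poly_upper_triangular[OF A] by simp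
qed

lemma char_poly_schreier_adj_Suc:
  assumes "p \<ge> 1"
  shows "char_poly (schreier_adj p (Suc n)) =
    [:- (2 * (real p - 1)), 1:] ^ ((p - 1) * (p + 1) ^ n) * pcompose (char_poly (schreier_adj p n)) (fp p)"
proof -
  let ?N = "(p + 1) ^ n" and ?c = "2 * (real p - 1)" and ?B = "branch_mat p n"
  have reindex: "char_poly (schreier_adj p (Suc n)) =
      char_poly (four_block_mat (0\<^sub>m ?N ?N) (transpose_mat ?B) ?B (?c \<cdot>\<^sub>m 1\<^sub>m (p * ?N)))"
    using char_poly_permute[OF schreier_adj_carrier first_letter_reindex_permutes]
    by (simp only: schreier_adj_Suc_reindex)
  have "char_poly (schreier_adj p (Suc n)) * [:- ?c, 1:] ^ ?N =
      pcompose (char_poly (transpose_mat ?B * ?B)) [:0, - ?c, 1:] * [:- ?c, 1:] ^ (p * ?N)"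
    unfolding reindex by (rule char_poly_four_block_transpose[OF branch_mat_carrier])
  (* B^T B = A_n + 2p I, and substituting x (x - c) for x in x - 2p gives f_p *)
  also have "pcompose (char_poly (transpose_mat ?B * ?B)) [:0, - ?c, 1:] =
      pcompose (char_poly (schreier_adj p n)) (fp p)"
    unfolding transpose_branch_mat_mult char_poly_add_smult_one[OF schreier_adj_carrier]
    by (simp add: pcompose_assoc[symmetric] pcompose_pCons fp_def)
  also have "(p * ?N) = (p - 1) * ?N + ?N"
    using assms by (simp add: algebra_simps)
  finally show ?thesis
    by (simp add: power_add ac_simps)
qed

lemma fp_iter_0 [simp]: "fp_iter p 0 = [:0, 1:]"
  by (simp add: fp_iter_def)

lemma fp_iter_Suc: "fp_iter p (Suc i) = pcompose (fp p) (fp_iter p i)"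
  by (simp add: fp_iter_def)

lemma fp_iter_Suc_right: "fp_iter p (Suc i) = pcompose (fp_iter p i) (fp p)"
  by (induction i) (simp_all add: fp_iter_Suc pcompose_pCons pcompose_assoc)

lemma char_poly_schreier_adj_fp_iter:
  assumes "p \<ge> 1"
  shows "char_poly (schreier_adj p n) = (fp_iter p n - [:2 * real p:]) *
    (\<Prod>i<n. (fp_iter p i - [:2 * (real p - 1):]) ^ ((p - 1) * (p + 1) ^ (n - i - 1)))"
proof (induction n)
  case 0
  then show ?case by (simp add: char_poly_schreier_adj_0)
next
  case (Suc n)
  let ?e = "\<lambda>n i. (p - 1) * (p + 1) ^ (n - i - 1)" and ?c = "[:2 * (real p - 1):]"
  have "(\<Prod>i<Suc n. (fp_iter p i - ?c) ^ ?e (Suc n) i) =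
      [:- (2 * (real p - 1)), 1:] ^ ((p - 1) * (p + 1) ^ n) *
      (\<Prod>i<n. (fp_iter p (Suc i) - ?c) ^ ?e n i)"
    unfolding prod.lessThan_Suc_shift by simp
  also have "(\<Prod>i<n. (fp_iter p (Suc i) - ?c) ^ ?e n i) =
      pcompose (\<Prod>i<n. (fp_iter p i - ?c) ^ ?e n i) (fp p)"
    by (simp add: pcompose_prod pcompose_power pcompose_diff fp_iter_Suc_right)
  finally show ?case
    unfolding char_poly_schreier_adj_Suc[OF assms] Suc pcompose_mult pcompose_diff
      fp_iter_Suc_right[symmetric]
    by (simp add: ac_simps)
qed

lemma fp_iter_minus_2p:
  "(fp_iter p n - [:2 * real p:] :: real poly) = [:- 2 * real p, 1:] * (\<Prod>i<n. fp_iter p i + [:2:])"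
proof (induction n)
  case (Suc n)
  let ?g = "fp_iter p n :: real poly"
  have "fp_iter p (Suc n) - [:2 * real p:] = (?g + [:2:]) * (?g - [:2 * real p:])"
    by (rule poly_ext) (simp add: fp_iter_Suc poly_pcompose fp_def algebra_simps power2_eq_square)
  then show ?case using Suc by (simp add: ac_simps)
qed simp

lemma char_poly_schreier_adj_factored:
  assumes "p \<ge> 1"
  shows "char_poly (schreier_adj p n) = [:- 2 * real p, 1:] * (\<Prod>i<n. fp_iter p i + [:2:]) *
    (\<Prod>i<n. (fp_iter p i - [:2 * (real p - 1):]) ^ ((p - 1) * (p + 1) ^ (n - i - 1)))"
  unfolding char_poly_schreier_adj_fp_iter[OF assms] fp_iter_minus_2p ..

lemma degree_fp_iter: "degree (fp_iter p i :: 'a :: idom poly) = 2 ^ i"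
proof (induction i)
  case (Suc i)
  have "degree (fp p :: 'a poly) = 2" by (simp add: fp_def)
  with Suc show ?case by (simp add: fp_iter_Suc degree_pcompose)
qed simp

lemma fp_iter_neq_const: "(fp_iter p i :: 'a :: idom poly) \<noteq> [:c:]"
proof
  assume "fp_iter p i = [:c:]"
  then have "degree (fp_iter p i :: 'a poly) = 0" by simp
  then show False by (simp add: degree_fp_iter)
qed

lemma map_poly_of_real_fp_iter: "map_poly complex_of_real (fp_iter p i) = fp_iter p i"
proof (induction i)
  case (Suc i)
  have "map_poly complex_of_real (fp p) = fp p" by (simp add: fp_def)
  with Suc show ?case by (simp add: fp_iter_Suc of_real_hom.map_poly_pcompose)
qed simp

lemma order_char_poly_schreier_adj:
  assumes "p \<ge> 1"
  shows "order x (char_poly (map_mat complex_of_real (schreier_adj p n))) =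
    (if x = 2 * of_nat p then 1 else 0) + (\<Sum>i<n. order x (fp_iter p i - [:- 2:])) +
    (\<Sum>i<n. (p - 1) * (p + 1) ^ (n - i - 1) * order x (fp_iter p i - [:2 * (of_nat p - 1):]))"
proof -
  let ?F = "[:- 2 * of_nat p, 1:] :: complex poly"
    and ?G = "\<Prod>i<n. fp_iter p i - [:- 2:] :: complex poly"
    and ?H = "\<Prod>i<n. (fp_iter p i - [:2 * (of_nat p - 1):]) ^ ((p - 1) * (p + 1) ^ (n - i - 1)) :: complex poly"
  interpret of_real_poly: map_poly_idom_hom complex_of_real ..
  have const: "map_poly complex_of_real [:c:] = [:complex_of_real c:]" for c
    by (rule poly_eqI) (simp add: coeff_map_poly coeff_pCons split: nat.split)
  have minus_2: "q - [:- 2:] = q + [:2:]" for q :: "complex poly"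
    by simp
  have factored: "char_poly (map_mat complex_of_real (schreier_adj p n)) = ?F * ?G * ?H"
    unfolding of_real_hom.char_poly_hom[OF schreier_adj_carrier] char_poly_schreier_adj_factored[OF assms]
      of_real_poly.hom_mult of_real_poly.hom_prod of_real_poly.hom_power of_real_poly.hom_minus
      of_real_poly.hom_add map_poly_of_real_fp_iter
    by (simp add: const minus_2)
  have nonzero: "?F \<noteq> 0" "?G \<noteq> 0" "?H \<noteq> 0"
    by (simp_all add: prod_zero_iff fp_iter_neq_const)
  have FG: "?F * ?G \<noteq> 0" using nonzero(1,2) by (rule no_zero_divisors)
  have FGH: "?F * ?G * ?H \<noteq> 0" using FG nonzero(3) by (rule no_zero_divisors)
  have "order x (?F * ?G * ?H) = order x ?F + order x ?G + order x ?H"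
    unfolding order_mult[OF FGH] order_mult[OF FG] ..
  moreover have "order x ?F = (if x = 2 * of_nat p then 1 else 0)"
    using order_power_n_n[of "2 * of_nat p" 1] by (auto intro: order_0I)
  moreover have "order x ?G = (\<Sum>i<n. order x (fp_iter p i - [:- 2:]))"
    by (simp add: order_prod fp_iter_neq_const)
  moreover have "order x ?H =
      (\<Sum>i<n. (p - 1) * (p + 1) ^ (n - i - 1) * order x (fp_iter p i - [:2 * (of_nat p - 1):]))"
    by (simp add: order_prod order_power fp_iter_neq_const)
  ultimately show ?thesis
    unfolding factored by simp
qed

theorem theorem3p9:
  fixes p n :: nat
  assumes "p \<ge> 1" and "n \<ge> 1"
  shows "char_poly (schreier_adj p n) =
           [: - 2 * real p, 1 :]
           * (\<Prod>i<n. fp_iter p i + [: 2 :])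
           * (\<Prod>i<n. (fp_iter p i - [: 2 * (real p - 1) :]) ^ ((p - 1) * (p + 1) ^ (n - i - 1)))
       \<and> (\<forall>x :: complex.
           order x (char_poly (map_mat complex_of_real (schreier_adj p n))) =
             (if x = 2 * of_nat p then 1 else 0)
             + (\<Sum>i<n. order x (fp_iter p i - [: - 2 :]))
             + (\<Sum>i<n. (p - 1) * (p + 1) ^ (n - i - 1)
                         * order x (fp_iter p i - [: 2 * (of_nat p - 1) :])))"
  using char_poly_schreier_adj_factored[OF assms(1)] order_char_poly_schreier_adj[OF assms(1)]
  by blast

end
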